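(* For any 2-CNF $\Phi$, the pruned 2-CNF $\hat\Phi$ is satisfiable.
   Context: A 2-CNF is a conjunction of clauses, each clause being the disjunction of two literals on two distinct variables. A clause $l\vee\neg l'$ is read as the implication $l'\to l$. For a 2-CNF $\Phi$ and a set $\mathcal L_0$ of literals, define $\mathcal L(\Phi,\mathcal L_0)$ as the output of Unit Clause Propagation: start with $\mathcal L=\mathcal L_0$ and, as long as $\Phi$ contains a clause $l\vee\neg l'$ with $l'\in\mathcal L$ and $l\notin\mathcal L$, add $l$ to $\mathcal L$. Let $\mathcal V_0(\Phi,\mathcal L_0)$ be the set of variables $x$ with both $x,\neg x\in\mathcal L(\Phi,\mathcal L_0)$. The set of conflict clauses $\mathcal C(\Phi,\mathcal L_0)$ is the set of clauses $a$ of $\Phi$ all of whose variables lie in $\mathcal V_0(\Phi,\mathcal L_0)$. The pruned formula $\hat\Phi$ is obtained from $\Phi$ by deleting all clauses in $\bigcup_l\mathcal C(\Phi,\{l\})$, where the union ranges over all literals $l\in\{x,\neg x\}$ with $x$ a variable of $\Phi$. *)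

theory Defs
  imports Main
begin

datatype 'v lit = Pos 'v | Neg 'v

fun var :: "'v lit \<Rightarrow> 'v" where
  "var (Pos x) = x" | "var (Neg x) = x"

fun neg :: "'v lit \<Rightarrow> 'v lit" where
  "neg (Pos x) = Neg x" | "neg (Neg x) = Pos x"

text \<open>A clause is a disjunction of two literals on distinct variables, represented
  as a pair; a 2-CNF is a finite set of such clauses.\<close>
type_synonym 'v clause = "'v lit \<times> 'v lit"

definition clause_vars :: "'v clause \<Rightarrow> 'v set" where
  "clause_vars c = {var (fst c), var (snd c)}"

definition is_2cnf :: "'v clause set \<Rightarrow> bool" where
  "is_2cnf \<Phi> \<longleftrightarrow> finite \<Phi> \<and> (\<forall>c\<in>\<Phi>. var (fst c) \<noteq> var (snd c))"

definition cnf_vars :: "'v clause set \<Rightarrow> 'v set" where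
  "cnf_vars \<Phi> = (\<Union>c\<in>\<Phi>. clause_vars c)"

text \<open>A clause (a,b) = a \<or> b can be read as a \<or> \<not>(neg b) and as b \<or> \<not>(neg a).\<close>
inductive_set ucp :: "'v clause set \<Rightarrow> 'v lit set \<Rightarrow> 'v lit set"
  for \<Phi> :: "'v clause set" and L0 :: "'v lit set" where
  init: "l \<in> L0 \<Longrightarrow> l \<in> ucp \<Phi> L0"
| step1: "(a, b) \<in> \<Phi> \<Longrightarrow> neg b \<in> ucp \<Phi> L0 \<Longrightarrow> a \<in> ucp \<Phi> L0"
| step2: "(a, b) \<in> \<Phi> \<Longrightarrow> neg a \<in> ucp \<Phi> L0 \<Longrightarrow> b \<in> ucp \<Phi> L0"

definition V0 :: "'v clause set \<Rightarrow> 'v lit set \<Rightarrow> 'v set" where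
  "V0 \<Phi> L0 = {x. Pos x \<in> ucp \<Phi> L0 \<and> Neg x \<in> ucp \<Phi> L0}"

definition conflict_clauses :: "'v clause set \<Rightarrow> 'v lit set \<Rightarrow> 'v clause set" where
  "conflict_clauses \<Phi> L0 = {c \<in> \<Phi>. clause_vars c \<subseteq> V0 \<Phi> L0}"

definition pruned :: "'v clause set \<Rightarrow> 'v clause set" where
  "pruned \<Phi> = \<Phi> - (\<Union>l\<in>{l. var l \<in> cnf_vars \<Phi>}. conflict_clauses \<Phi> {l})"

fun lit_val :: "('v \<Rightarrow> bool) \<Rightarrow> 'v lit \<Rightarrow> bool" where
  "lit_val \<sigma> (Pos x) = \<sigma> x" | "lit_val \<sigma> (Neg x) = (\<not> \<sigma> x)"

definition satisfiable :: "'v clause set \<Rightarrow> bool" where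
  "satisfiable \<Phi> \<longleftrightarrow> (\<exists>\<sigma>. \<forall>c\<in>\<Phi>. lit_val \<sigma> (fst c) \<or> lit_val \<sigma> (snd c))"

end

theory Submission
  imports Defs
begin

text \<open>A 2-CNF is satisfiable as soon as no variable x propagates to \<not>x. Indeed, setting
  every literal propagated from x to true is then consistent, and it satisfies every clause
  touching one of its variables (if \<not>a is set, the clause a \<or> b propagates b), so we may
  recurse on the clauses it leaves untouched.
  In the pruned formula no literal l propagates to \<not>l: the last propagation step would use
  a surviving clause a \<or> b with \<not>a and \<not>b propagated from l. Propagating from l in \<Phi>
  then yields both literals of var a and of var b, so a \<or> b is a conflict clause of {l}
  and was deleted.\<close>

lemma neg_neg [simp]: "neg (neg m) = m"
  by (cases m) auto

lemma var_neg [simp]: "var (neg m) = var m"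
  by (cases m) auto

lemma neg_neq [simp]: "neg m \<noteq> m"
  by (cases m) auto

lemma var_eq_var_iff: "var m = var n \<longleftrightarrow> m = n \<or> m = neg n"
  by (cases m; cases n) auto

lemma ucp_mono_formula: "m \<in> ucp F L \<Longrightarrow> F \<subseteq> G \<Longrightarrow> m \<in> ucp G L"
  by (induction rule: ucp.induct) (auto intro: ucp.intros)

lemma ucp_singleton_trans: "n \<in> ucp F {m} \<Longrightarrow> m \<in> ucp F L \<Longrightarrow> n \<in> ucp F L"
  by (induction rule: ucp.induct) (auto intro: ucp.intros)

lemma ucp_contrapos: "m \<in> ucp F {l} \<Longrightarrow> neg l \<in> ucp F {neg m}"
proof (induction rule: ucp.induct)
  case (init m)
  then show ?case
    by (auto intro: ucp.init)
next
  case (step1 a b)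
  have "b \<in> ucp F {neg a}"
    using step1.hyps(1) by (auto intro: ucp.intros)
  with step1.IH show ?case
    using ucp_singleton_trans by fastforce
next
  case (step2 a b)
  have "a \<in> ucp F {neg b}"
    using step2.hyps(1) by (auto intro: ucp.intros)
  with step2.IH show ?case
    using ucp_singleton_trans by fastforce
qed

lemma ucp_complementary_refutes:
  assumes "m \<in> ucp F {l}" and "neg m \<in> ucp F {l}"
  shows "neg l \<in> ucp F {l}"
  using ucp_singleton_trans[OF ucp_contrapos[OF assms(1)] assms(2)] .

definition models :: "('v \<Rightarrow> bool) \<Rightarrow> 'v clause set \<Rightarrow> bool" where
  "models \<sigma> F \<longleftrightarrow> (\<forall>c\<in>F. lit_val \<sigma> (fst c) \<or> lit_val \<sigma> (snd c))"

lemma satisfiable_iff_models: "satisfiable F \<longleftrightarrow> (\<exists>\<sigma>. models \<sigma> F)"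
  by (simp add: satisfiable_def models_def)

definition make_true :: "'v lit set \<Rightarrow> ('v \<Rightarrow> bool) \<Rightarrow> 'v \<Rightarrow> bool" where
  "make_true L \<sigma> y = (if Pos y \<in> L then True else if Neg y \<in> L then False else \<sigma> y)"

lemma lit_val_make_true:
  assumes "m \<in> L" and "neg m \<notin> L"
  shows "lit_val (make_true L \<sigma>) m"
  using assms by (cases m) (auto simp: make_true_def)

lemma lit_val_make_true_untouched:
  "var m \<notin> var ` L \<Longrightarrow> lit_val (make_true L \<sigma>) m = lit_val \<sigma> m"
  by (cases m) (auto simp: make_true_def image_iff)

lemma var_in_image_var_iff: "var m \<in> var ` L \<longleftrightarrow> m \<in> L \<or> neg m \<in> L"
  unfolding image_iff by (metis neg_neg var_eq_var_iff var_neg)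

definition untouched_clauses :: "'v clause set \<Rightarrow> 'v lit set \<Rightarrow> 'v clause set" where
  "untouched_clauses F L = {c\<in>F. clause_vars c \<inter> var ` L = {}}"

lemma cnf_vars_untouched_clauses: "cnf_vars (untouched_clauses F L) \<subseteq> cnf_vars F - var ` L"
  by (auto simp: untouched_clauses_def cnf_vars_def)

lemma models_make_true_ucp:
  assumes consistent: "\<And>m. m \<in> ucp F L0 \<Longrightarrow> neg m \<notin> ucp F L0"
    and untouched: "models \<sigma> (untouched_clauses F (ucp F L0))"
  shows "models (make_true (ucp F L0) \<sigma>) F"
proof -
  let ?L = "ucp F L0" and ?\<tau> = "make_true (ucp F L0) \<sigma>"
  have true_on_L: "lit_val ?\<tau> m" if "m \<in> ?L" for m
    using lit_val_make_true[OF that consistent[OF that]] .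
  have clause_true: "lit_val ?\<tau> a \<or> lit_val ?\<tau> b" if ab: "(a, b) \<in> F" for a b
  proof (cases "var a \<in> var ` ?L \<or> var b \<in> var ` ?L")
    case True
    then have "a \<in> ?L \<or> neg a \<in> ?L \<or> b \<in> ?L \<or> neg b \<in> ?L"
      by (simp add: var_in_image_var_iff)
    then have "a \<in> ?L \<or> b \<in> ?L"
      using ucp.step1[OF ab] ucp.step2[OF ab] by blast
    then show ?thesis
      using true_on_L by blast
  next
    case False
    with ab have "(a, b) \<in> untouched_clauses F ?L"
      by (auto simp: untouched_clauses_def clause_vars_def)
    with untouched have "lit_val \<sigma> a \<or> lit_val \<sigma> b"
      unfolding models_def by fastforce
    with False show ?thesis
      by (simp add: lit_val_make_true_untouched)
  qed
  show ?thesis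
    unfolding models_def
  proof
    fix c assume "c \<in> F"
    then show "lit_val ?\<tau> (fst c) \<or> lit_val ?\<tau> (snd c)"
      using clause_true[of "fst c" "snd c"] by simp
  qed
qed

lemma satisfiable_if_no_Pos_propagates_Neg:
  assumes "finite (cnf_vars F)" and "\<forall>y. Neg y \<notin> ucp F {Pos y}"
  shows "satisfiable F"
proof -
  have "cnf_vars F \<subseteq> S \<Longrightarrow> \<forall>y. Neg y \<notin> ucp F {Pos y} \<Longrightarrow> satisfiable F" if "finite S" for S
    using that
  proof (induction S arbitrary: F rule: finite_induct)
    case empty
    then have "F = {}"
      by (auto simp: cnf_vars_def clause_vars_def)
    then show ?case
      by (simp add: satisfiable_def)
  next
    case (insert x S)
    let ?L = "ucp F {Pos x}"
    let ?F' = "untouched_clauses F ?L"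
    have "x \<in> var ` ?L"
      using ucp.init[of "Pos x" "{Pos x}" F] by force
    then have "cnf_vars ?F' \<subseteq> S"
      using cnf_vars_untouched_clauses[of F ?L] insert.prems(1) by blast
    moreover have "\<forall>y. Neg y \<notin> ucp ?F' {Pos y}"
      using insert.prems(2) ucp_mono_formula[of _ ?F' _ F] by (auto simp: untouched_clauses_def)
    ultimately obtain \<sigma> where "models \<sigma> ?F'"
      using insert.IH satisfiable_iff_models by blast
    moreover have "neg m \<notin> ?L" if "m \<in> ?L" for m
    proof
      assume "neg m \<in> ?L"
      with \<open>m \<in> ?L\<close> have "Neg x \<in> ?L"
        using ucp_complementary_refutes by fastforce
      with insert.prems(2) show False
        by blast
    qed
    ultimately have "models (make_true ?L \<sigma>) F"
      by (rule models_make_true_ucp[rotated])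
    then show ?case
      using satisfiable_iff_models by blast
  qed
  with assms show ?thesis
    by blast
qed

lemma pruned_clause_not_falsified:
  assumes "(a, b) \<in> pruned \<Phi>" and "var l \<in> clause_vars (a, b)"
    and "neg a \<in> ucp \<Phi> {l}" and "neg b \<in> ucp \<Phi> {l}"
  shows False
proof -
  have ab: "(a, b) \<in> \<Phi>"
    using assms(1) by (simp add: pruned_def)
  have "a \<in> ucp \<Phi> {l}" and "b \<in> ucp \<Phi> {l}"
    using ab assms(3,4) by (auto intro: ucp.intros)
  with assms(3,4) have "clause_vars (a, b) \<subseteq> V0 \<Phi> {l}"
    by (cases a; cases b) (auto simp: V0_def clause_vars_def)
  with ab have "(a, b) \<in> conflict_clauses \<Phi> {l}"
    by (simp add: conflict_clauses_def)
  moreover have "var l \<in> cnf_vars \<Phi>"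
    using ab assms(2) by (auto simp: cnf_vars_def)
  ultimately show False
    using assms(1) by (auto simp: pruned_def)
qed

lemma pruned_lit_not_propagates_neg: "neg l \<notin> ucp (pruned \<Phi>) {l}"
proof
  assume "neg l \<in> ucp (pruned \<Phi>) {l}"
  then show False
  proof cases
    case init
    then show False
      by simp
  next
    case (step1 b)
    moreover have "neg b \<in> ucp \<Phi> {l}"
      using step1(2) ucp_mono_formula pruned_def by blast
    ultimately show False
      using pruned_clause_not_falsified[of "neg l" b \<Phi> l] ucp.init[of l]
      by (auto simp: clause_vars_def)
  next
    case (step2 a)
    moreover have "neg a \<in> ucp \<Phi> {l}"
      using step2(2) ucp_mono_formula pruned_def by blast
    ultimately show False
      using pruned_clause_not_falsified[of a "neg l" \<Phi> l] ucp.init[of l]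
      by (auto simp: clause_vars_def)
  qed
qed

theorem fact2p2:
  fixes \<Phi> :: "'v clause set"
  assumes "is_2cnf \<Phi>"
  shows "satisfiable (pruned \<Phi>)"
proof (rule satisfiable_if_no_Pos_propagates_Neg)
  have "pruned \<Phi> \<subseteq> \<Phi>"
    by (auto simp: pruned_def)
  with assms show "finite (cnf_vars (pruned \<Phi>))"
    by (auto simp: is_2cnf_def cnf_vars_def clause_vars_def intro: finite_subset)
  show "\<forall>y. Neg y \<notin> ucp (pruned \<Phi>) {Pos y}"
  proof
    fix y
    show "Neg y \<notin> ucp (pruned \<Phi>) {Pos y}"
      using pruned_lit_not_propagates_neg[of "Pos y" \<Phi>] by simp
  qed
qed

end
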